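(* Let $a,b,c,d\ge1$ be integers and let $$M=\begin{bmatrix}a&-1&-1&-1\\-1&b&-1&-1\\-1&-1&c&-1\\-1&-1&-1&d\end{bmatrix}.$$ If $\det M=0$ and two of $a,b,c,d$ equal $5$, then the other two are either $1$ and $5$ (in some order) or $2$ and $2$. *)

theory Defs
  imports "HOL-Analysis.Analysis"
begin

definition Mabcd :: "int \<Rightarrow> int \<Rightarrow> int \<Rightarrow> int \<Rightarrow> int^4^4" where
  "Mabcd a b c d = (\<chi> i j. if i = j then
      (if i = 1 then a else if i = 2 then b else if i = 3 then c else d)
    else -1)"

end

theory Submission
  imports Defs
begin

(* M is diag(a+1, b+1, c+1, d+1) minus the all-ones matrix, so
   det M = (a+1)(b+1)(c+1)(d+1) (1 - 1/(a+1) - 1/(b+1) - 1/(c+1) - 1/(d+1)),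
   and det M = 0 says that the reciprocals 1/(x+1), x ranging over the multiset
   {a, b, c, d}, sum to 1.  Two entries 5 contribute 1/6 each, so the remaining
   two entries x, y satisfy 1/(x+1) + 1/(y+1) = 2/3, i.e. (2x-1)(2y-1) = 9,
   whose only solutions with x, y >= 1 are {1, 5} and {2, 2}. *)

lemma det_Mabcd:
  "det (Mabcd a b c d) =
     (a + 1) * (b + 1) * (c + 1) * (d + 1)
     - (b + 1) * (c + 1) * (d + 1) - (a + 1) * (c + 1) * (d + 1)
     - (a + 1) * (b + 1) * (d + 1) - (a + 1) * (b + 1) * (c + 1)"
proof -
  have "finite {2::4, 3, 4}" "1 \<notin> {2::4, 3, 4}"
    and "finite {3::4, 4}" "2 \<notin> {3::4, 4}"
    and "finite {4::4}" "3 \<notin> {4::4}"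
    by auto
  note expand = sum_over_permutations_insert[OF this(1,2)]
    sum_over_permutations_insert[OF this(3,4)]
    sum_over_permutations_insert[OF this(5,6)]
  show ?thesis
    unfolding det_def UNIV_4 expand permutes_sing
    by (simp add: Mabcd_def sign_swap_id permutation_swap_id sign_compose
        permutation_compose swap_id_eq algebra_simps)
qed

lemma reciprocal_sum_eq_1_iff:
  fixes A B C D :: "'a::field"
  assumes "A \<noteq> 0" "B \<noteq> 0" "C \<noteq> 0" "D \<noteq> 0"
  shows "1 / A + 1 / B + 1 / C + 1 / D = 1 \<longleftrightarrow>
    A * B * C * D - B * C * D - A * C * D - A * B * D - A * B * C = 0"
  using assms by (auto simp: field_simps)

lemma det_Mabcd_eq_0_iff:
  assumes "a \<noteq> -1" "b \<noteq> -1" "c \<noteq> -1" "d \<noteq> -1"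
  shows "det (Mabcd a b c d) = 0 \<longleftrightarrow>
    (\<Sum>x\<in>#mset [a, b, c, d]. 1 / (real_of_int x + 1)) = 1"
proof -
  have "real_of_int a + 1 \<noteq> 0" "real_of_int b + 1 \<noteq> 0"
    "real_of_int c + 1 \<noteq> 0" "real_of_int d + 1 \<noteq> 0"
    using assms by linarith+
  note reciprocal_sum_eq_1_iff[OF this]
  moreover have "(\<Sum>x\<in>#mset [a, b, c, d]. 1 / (real_of_int x + 1)) =
    1 / (real_of_int a + 1) + 1 / (real_of_int b + 1)
    + 1 / (real_of_int c + 1) + 1 / (real_of_int d + 1)"
    by (simp add: add.assoc)
  moreover have "real_of_int (det (Mabcd a b c d)) =
     (real_of_int a + 1) * (real_of_int b + 1) * (real_of_int c + 1) * (real_of_int d + 1)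
     - (real_of_int b + 1) * (real_of_int c + 1) * (real_of_int d + 1)
     - (real_of_int a + 1) * (real_of_int c + 1) * (real_of_int d + 1)
     - (real_of_int a + 1) * (real_of_int b + 1) * (real_of_int d + 1)
     - (real_of_int a + 1) * (real_of_int b + 1) * (real_of_int c + 1)"
    unfolding det_Mabcd by simp
  ultimately show ?thesis
    by (metis of_int_eq_0_iff)
qed

lemma reciprocal_pair_eq_two_thirds_iff:
  fixes A B :: "'a::field_char_0"
  assumes "A \<noteq> 0" "B \<noteq> 0"
  shows "1 / A + 1 / B = 2 / 3 \<longleftrightarrow> 3 * (A + B) = 2 * A * B"
  using assms by (auto simp: field_simps)

lemma mset_eq_add_nth_nth:
  assumes "i < length xs" "j < length xs" "i \<noteq> j"
  shows "mset xs = {#xs ! i, xs ! j#} +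
    mset (map (nth xs) (filter (\<lambda>k. k \<noteq> i \<and> k \<noteq> j) [0..<length xs]))"
proof -
  let ?I = "mset [0..<length xs]"
  have "{#k \<in># ?I. \<not> (k \<noteq> i \<and> k \<noteq> j)#} = mset_set {i, j}"
    unfolding mset_upt filter_mset_mset_set[OF finite_atLeastLessThan]
    using assms by (intro arg_cong[where f = mset_set]) auto
  also have "\<dots> = {#i, j#}"
    using \<open>i \<noteq> j\<close> by simp
  finally have "?I = {#i, j#} + {#k \<in># ?I. k \<noteq> i \<and> k \<noteq> j#}"
    using multiset_partition[of ?I "\<lambda>k. \<not> (k \<noteq> i \<and> k \<noteq> j)"] by (simp only: not_not)
  then have "image_mset (nth xs) ?I =
      {#xs ! i, xs ! j#} + image_mset (nth xs) {#k \<in># ?I. k \<noteq> i \<and> k \<noteq> j#}"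
    by simp
  moreover have "mset xs = image_mset (nth xs) ?I"
    by (simp only: map_nth flip: mset_map)
  ultimately show ?thesis
    by (simp only: mset_map mset_filter)
qed

lemma size_mset_2E:
  assumes "size M = 2"
  obtains x y where "M = {#x, y#}"
proof -
  obtain x M' where "M = add_mset x M'"
    using size_eq_Suc_imp_eq_union[of M 1] assms by auto
  moreover have "size M' = 1"
    using calculation assms by simp
  then obtain y where "M' = {#y#}"
    using size_1_singleton_mset by blast
  ultimately show ?thesis
    using that by simp
qed

lemma reciprocal_sum_eq_two_thirds_cases:
  fixes R :: "int multiset"
  assumes "size R = 2" "\<forall>x\<in>#R. x \<ge> 1"
    and "(\<Sum>x\<in>#R. 1 / (real_of_int x + 1)) = 2 / 3"
  shows "R \<in> {{#1, 5#}, {#2, 2#}}"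
proof -
  obtain x y where R: "R = {#x, y#}"
    using \<open>size R = 2\<close> by (rule size_mset_2E)
  have "x \<ge> 1" "y \<ge> 1" "1 / (real_of_int x + 1) + 1 / (real_of_int y + 1) = 2 / 3"
    using assms(2,3) unfolding R by simp_all
  then have "3 * ((real_of_int x + 1) + (real_of_int y + 1)) = 2 * (real_of_int x + 1) * (real_of_int y + 1)"
    using reciprocal_pair_eq_two_thirds_iff[of "real_of_int x + 1" "real_of_int y + 1"] by simp
  then have "3 * ((x + 1) + (y + 1)) = 2 * (x + 1) * (y + 1)"
    unfolding of_int_eq_iff[where 'a = real, symmetric] by simp
  then have prod: "(2 * x - 1) * (2 * y - 1) = 9"
    by (simp add: algebra_simps)
  have "2 * x - 1 \<ge> 1" "2 * y - 1 \<ge> 1"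
    using \<open>x \<ge> 1\<close> \<open>y \<ge> 1\<close> by simp_all
  then have "2 * x - 1 \<le> 9" "2 * y - 1 \<le> 9"
    unfolding prod[symmetric] by simp_all
  then have "x \<in> {1, 2, 3, 4, 5}" "y \<in> {1, 2, 3, 4, 5}"
    using \<open>x \<ge> 1\<close> \<open>y \<ge> 1\<close> by auto
  then show ?thesis
    using prod unfolding R by (auto simp: add_mset_commute)
qed

theorem lemma3p9:
  fixes a b c d :: int
  assumes "a \<ge> 1" "b \<ge> 1" "c \<ge> 1" "d \<ge> 1"
    and "det (Mabcd a b c d) = 0"
    and "i \<in> {0..<4::nat}" "j \<in> {0..<4::nat}" "i \<noteq> j"
    and "[a, b, c, d] ! i = 5" "[a, b, c, d] ! j = 5"
  shows "mset (map (\<lambda>k. [a, b, c, d] ! k)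
           (filter (\<lambda>k. k \<noteq> i \<and> k \<noteq> j) [0..<4]))
         \<in> {{#1, 5#}, {#2, 2#}}"
proof -
  define xs where "xs = [a, b, c, d]"
  let ?R = "mset (map (nth xs) (filter (\<lambda>k. k \<noteq> i \<and> k \<noteq> j) [0..<4]))"
  have "length xs = 4"
    by (simp add: xs_def)
  then have split: "mset xs = {#5, 5#} + ?R"
    using mset_eq_add_nth_nth[of i xs j] assms(6-10) unfolding xs_def[symmetric] by simp
  have "size ?R = 2"
    using arg_cong[OF split, of size] \<open>length xs = 4\<close> by simp
  moreover have "\<forall>x\<in>#?R. x \<ge> 1"
  proof
    fix x
    assume "x \<in># ?R"
    then have "x \<in> set xs"
      using split by (metis set_mset_mset union_iff)
    then show "x \<ge> 1"
      using assms(1-4) by (auto simp: xs_def)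
  qed
  moreover have "(\<Sum>x\<in>#mset xs. 1 / (real_of_int x + 1)) = 1"
    using det_Mabcd_eq_0_iff assms(1-5) unfolding xs_def by simp
  then have "(\<Sum>x\<in>#?R. 1 / (real_of_int x + 1)) = 2 / 3"
    unfolding split by simp
  ultimately show ?thesis
    unfolding xs_def[symmetric] by (rule reciprocal_sum_eq_two_thirds_cases)
qed

end
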